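(* Let $\mathcal{M}$ be a circular orientable embedding of a connected graph $X$ with $n$ vertices, $\ell$ edges and $s$ faces, and let $U$ be its vertex-face transition matrix. If either $X$ or its dual graph is regular, then \[\operatorname{tr}(U)=2\left(\frac{ns}{\ell}-(n+s-\ell)\right).\]
   Context: Setting. A circular embedding is a cellular embedding in which every face is bounded by a cycle. Arcs are ordered pairs $(u,v)$ with $\{u,v\}$ an edge, and $u$ is the tail. Vertex-face transition matrix. Fix a consistent orientation of the faces: for each edge shared by two faces, the two faces give it opposite directions. Then every arc lies in exactly one facial walk. Let $M$ be the arc-face incidence matrix and $N$ the arc-tail incidence matrix ($N_{(a,b),u}=1$ iff $a=u$). Let $\widehat M,\widehat N$ be these matrices with columns scaled to unit length. The vertex-face transition matrix is $U=(2\widehat M\widehat M^T-I)(2\widehat N\widehat N^T-I)$. The dual graph has the faces as vertices, with two faces adjacent for each edge they share. *)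

theory Defs
  imports Complex_Main "HOL-Combinatorics.Permutations"
begin

definition simple_graph :: "'v set \<Rightarrow> ('v \<Rightarrow> 'v \<Rightarrow> bool) \<Rightarrow> bool" where
  "simple_graph V E \<longleftrightarrow> finite V \<and>
     (\<forall>u v. E u v \<longrightarrow> u \<in> V \<and> v \<in> V \<and> E v u \<and> u \<noteq> v)"

definition connected_graph :: "'v set \<Rightarrow> ('v \<Rightarrow> 'v \<Rightarrow> bool) \<Rightarrow> bool" where
  "connected_graph V E \<longleftrightarrow> simple_graph V E \<and> V \<noteq> {} \<and>
     (\<forall>u\<in>V. \<forall>v\<in>V. E\<^sup>*\<^sup>* u v)"

text \<open>Arcs: ordered pairs (u,v) with {u,v} an edge; u = fst is the tail.\<close>
definition arcs :: "'v set \<Rightarrow> ('v \<Rightarrow> 'v \<Rightarrow> bool) \<Rightarrow> ('v \<times> 'v) set" where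
  "arcs V E = {(u, v). u \<in> V \<and> v \<in> V \<and> E u v}"

definition graph_edges :: "('v \<Rightarrow> 'v \<Rightarrow> bool) \<Rightarrow> 'v set set" where
  "graph_edges E = {{u, v} | u v. E u v}"

definition degree :: "('v \<Rightarrow> 'v \<Rightarrow> bool) \<Rightarrow> 'v \<Rightarrow> nat" where
  "degree E u = card {v. E u v}"

definition regular_graph :: "'v set \<Rightarrow> ('v \<Rightarrow> 'v \<Rightarrow> bool) \<Rightarrow> bool" where
  "regular_graph V E \<longleftrightarrow> (\<exists>k. \<forall>u\<in>V. degree E u = k)"

text \<open>An orientable cellular embedding of a connected graph is encoded (up to
  homeomorphism) by a rotation system: a permutation rho of the arcs that fixes
  tails and acts as a single cyclic permutation on the arcs leaving each vertex.\<close>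
definition rotation_system ::
  "'v set \<Rightarrow> ('v \<Rightarrow> 'v \<Rightarrow> bool) \<Rightarrow> ('v \<times> 'v \<Rightarrow> 'v \<times> 'v) \<Rightarrow> bool" where
  "rotation_system V E \<rho> \<longleftrightarrow> \<rho> permutes arcs V E \<and>
     (\<forall>a\<in>arcs V E. fst (\<rho> a) = fst a) \<and>
     (\<forall>a\<in>arcs V E. \<forall>b\<in>arcs V E. fst a = fst b \<longrightarrow> (\<exists>k. (\<rho> ^^ k) a = b))"

definition face_perm :: "('v \<times> 'v \<Rightarrow> 'v \<times> 'v) \<Rightarrow> 'v \<times> 'v \<Rightarrow> 'v \<times> 'v" where
  "face_perm \<rho> a = \<rho> (snd a, fst a)"

definition face_of :: "('v \<times> 'v \<Rightarrow> 'v \<times> 'v) \<Rightarrow> 'v \<times> 'v \<Rightarrow> ('v \<times> 'v) set" where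
  "face_of \<rho> a = {(face_perm \<rho> ^^ k) a | k. True}"

definition faces ::
  "'v set \<Rightarrow> ('v \<Rightarrow> 'v \<Rightarrow> bool) \<Rightarrow> ('v \<times> 'v \<Rightarrow> 'v \<times> 'v) \<Rightarrow> ('v \<times> 'v) set set" where
  "faces V E \<rho> = face_of \<rho> ` arcs V E"

text \<open>Circular: every facial walk is a cycle, i.e. it has length at least 3
  and visits pairwise distinct vertices (tails of its arcs are distinct).\<close>
definition circular ::
  "'v set \<Rightarrow> ('v \<Rightarrow> 'v \<Rightarrow> bool) \<Rightarrow> ('v \<times> 'v \<Rightarrow> 'v \<times> 'v) \<Rightarrow> bool" where
  "circular V E \<rho> \<longleftrightarrow> (\<forall>f\<in>faces V E \<rho>. card f \<ge> 3 \<and> inj_on fst f)"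

text \<open>Degree of a face in the dual (multi)graph: the number of edges on its
  boundary, counted with multiplicity, i.e. the number of arcs of its facial walk.\<close>
definition dual_degree :: "('v \<times> 'v) set \<Rightarrow> nat" where
  "dual_degree f = card f"

definition dual_regular ::
  "'v set \<Rightarrow> ('v \<Rightarrow> 'v \<Rightarrow> bool) \<Rightarrow> ('v \<times> 'v \<Rightarrow> 'v \<times> 'v) \<Rightarrow> bool" where
  "dual_regular V E \<rho> \<longleftrightarrow> (\<exists>k. \<forall>f\<in>faces V E \<rho>. dual_degree f = k)"

definition mmult :: "'k set \<Rightarrow> ('i \<Rightarrow> 'k \<Rightarrow> real) \<Rightarrow> ('k \<Rightarrow> 'j \<Rightarrow> real) \<Rightarrow> 'i \<Rightarrow> 'j \<Rightarrow> real" where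
  "mmult K X Y i j = (\<Sum>k\<in>K. X i k * Y k j)"

definition mtranspose :: "('i \<Rightarrow> 'j \<Rightarrow> real) \<Rightarrow> 'j \<Rightarrow> 'i \<Rightarrow> real" where
  "mtranspose X j i = X i j"

definition idm :: "'i \<Rightarrow> 'i \<Rightarrow> real" where
  "idm i j = (if i = j then 1 else 0)"

definition mtrace :: "'i set \<Rightarrow> ('i \<Rightarrow> 'i \<Rightarrow> real) \<Rightarrow> real" where
  "mtrace I X = (\<Sum>i\<in>I. X i i)"

definition col_normalize :: "'i set \<Rightarrow> ('i \<Rightarrow> 'j \<Rightarrow> real) \<Rightarrow> 'i \<Rightarrow> 'j \<Rightarrow> real" where
  "col_normalize R X i j = X i j / sqrt (\<Sum>r\<in>R. (X r j)\<^sup>2)"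

definition arc_face_inc :: "'v \<times> 'v \<Rightarrow> ('v \<times> 'v) set \<Rightarrow> real" where
  "arc_face_inc a f = (if a \<in> f then 1 else 0)"

definition arc_tail_inc :: "'v \<times> 'v \<Rightarrow> 'v \<Rightarrow> real" where
  "arc_tail_inc a u = (if fst a = u then 1 else 0)"

definition vf_transition ::
  "'v set \<Rightarrow> ('v \<Rightarrow> 'v \<Rightarrow> bool) \<Rightarrow> ('v \<times> 'v \<Rightarrow> 'v \<times> 'v) \<Rightarrow>
   'v \<times> 'v \<Rightarrow> 'v \<times> 'v \<Rightarrow> real" where
  "vf_transition V E \<rho> =
     (let A = arcs V E; F = faces V E \<rho>;
          Mh = col_normalize A arc_face_inc;
          Nh = col_normalize A arc_tail_inc
      in mmult A (\<lambda>a b. 2 * mmult F Mh (mtranspose Mh) a b - idm a b)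
                 (\<lambda>a b. 2 * mmult V Nh (mtranspose Nh) a b - idm a b))"

end

theory Submission
  imports Defs "HOL-Combinatorics.Orbits"
begin

text \<open>The faces and the vertex stars partition the arcs, and \<open>2\<widehat>M\<widehat>M\<^sup>T - I\<close>,
  \<open>2\<widehat>N\<widehat>N\<^sup>T - I\<close> are the reflections in the spans of the indicator vectors of the
  two partitions. Circularity means that an arc is determined by its face and its tail, so the
  diagonal entry of \<open>U\<close> at an arc \<open>a\<close> is \<open>(2/|f a| - 1) (2/deg (tail a) - 1)\<close>.
  Summing over the \<open>2\<ell>\<close> arcs, \<open>\<Sum> 1/|f a| = s\<close> and \<open>\<Sum> 1/deg (tail a) = n\<close>; if one of the
  two factors is constant, then \<open>\<Sum> 1/(|f a| deg (tail a)) = s n / 2\<ell>\<close>, and the formula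
  follows.\<close>

abbreviation normalized_gram :: "'a set \<Rightarrow> 'j set \<Rightarrow> ('a \<Rightarrow> 'j \<Rightarrow> real) \<Rightarrow> 'a \<Rightarrow> 'a \<Rightarrow> real"
  where "normalized_gram A J X \<equiv> mmult J (col_normalize A X) (mtranspose (col_normalize A X))"

abbreviation reflection :: "('a \<Rightarrow> 'a \<Rightarrow> real) \<Rightarrow> 'a \<Rightarrow> 'a \<Rightarrow> real"
  where "reflection P \<equiv> \<lambda>a b. 2 * P a b - idm a b"

lemma sum_by_fibres:
  fixes g :: "'j \<Rightarrow> real"
  assumes "finite A"
  shows "(\<Sum>a\<in>A. g (\<phi> a)) = (\<Sum>j\<in>\<phi> ` A. real (card {r\<in>A. \<phi> r = j}) * g j)"
proof -
  have "(\<Sum>a\<in>A. g (\<phi> a)) = (\<Sum>j\<in>\<phi> ` A. \<Sum>r\<in>{r\<in>A. \<phi> r = j}. g (\<phi> r))"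
    using assms by (rule sum.image_gen)
  also have "\<dots> = (\<Sum>j\<in>\<phi> ` A. real (card {r\<in>A. \<phi> r = j}) * g j)"
    by (rule sum.cong) auto
  finally show ?thesis .
qed

lemma sum_inverse_card_fibre:
  assumes "finite A"
  shows "(\<Sum>a\<in>A. 1 / real (card {r\<in>A. \<phi> r = \<phi> a})) = real (card (\<phi> ` A))"
proof -
  have "(\<Sum>a\<in>A. 1 / real (card {r\<in>A. \<phi> r = \<phi> a}))
      = (\<Sum>j\<in>\<phi> ` A. real (card {r\<in>A. \<phi> r = j}) * (1 / real (card {r\<in>A. \<phi> r = j})))"
    using assms by (rule sum_by_fibres)
  also have "\<dots> = (\<Sum>j\<in>\<phi> ` A. 1)"
    using assms by (intro sum.cong) (auto simp: card_gt_0_iff)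
  finally show ?thesis by simp
qed

lemma normalized_gram_indicator:
  assumes "finite A" "finite J" and labels: "\<phi> ` A \<subseteq> J"
    and indicator: "\<And>r j. r \<in> A \<Longrightarrow> j \<in> J \<Longrightarrow> X r j = (if \<phi> r = j then 1 else 0)"
    and "a \<in> A" "b \<in> A"
  shows "normalized_gram A J X a b
    = (if \<phi> b = \<phi> a then 1 / real (card {r\<in>A. \<phi> r = \<phi> a}) else 0)"
proof -
  have col_norm: "(\<Sum>r\<in>A. (X r j)\<^sup>2) = real (card {r\<in>A. \<phi> r = j})" if "j \<in> J" for j
  proof -
    have "(\<Sum>r\<in>A. (X r j)\<^sup>2) = (\<Sum>r\<in>A. if \<phi> r = j then 1 else 0)"
      using that by (intro sum.cong) (auto simp: indicator)
    then show ?thesis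
      using \<open>finite A\<close> by (simp add: sum.If_cases Collect_conj_eq)
  qed
  have fibre_pos: "card {r\<in>A. \<phi> r = \<phi> a} > 0"
    using \<open>finite A\<close> \<open>a \<in> A\<close> by (auto simp: card_gt_0_iff)
  have entry: "col_normalize A X a j * mtranspose (col_normalize A X) j b
      = (if j = \<phi> a then (if \<phi> b = \<phi> a then 1 / real (card {r\<in>A. \<phi> r = \<phi> a}) else 0)
         else 0)" if "j \<in> J" for j
    unfolding col_normalize_def mtranspose_def col_norm[OF that]
    using that \<open>a \<in> A\<close> \<open>b \<in> A\<close> fibre_pos by (auto simp: indicator)
  have "normalized_gram A J X a b
      = (\<Sum>j\<in>J. if j = \<phi> a then (if \<phi> b = \<phi> a then 1 / real (card {r\<in>A. \<phi> r = \<phi> a}) else 0)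
                 else 0)"
    unfolding mmult_def by (rule sum.cong) (simp_all add: entry)
  also have "\<dots> = (if \<phi> b = \<phi> a then 1 / real (card {r\<in>A. \<phi> r = \<phi> a}) else 0)"
    using \<open>finite J\<close> labels \<open>a \<in> A\<close> by (auto simp: sum.delta')
  finally show ?thesis .
qed

lemma mtrace_reflection_product:
  assumes "finite A" "finite J" "finite K" "\<phi> ` A \<subseteq> J" "\<psi> ` A \<subseteq> K"
    and X: "\<And>r j. r \<in> A \<Longrightarrow> j \<in> J \<Longrightarrow> X r j = (if \<phi> r = j then 1 else 0)"
    and Y: "\<And>r k. r \<in> A \<Longrightarrow> k \<in> K \<Longrightarrow> Y r k = (if \<psi> r = k then 1 else 0)"
    and labels_determine: "inj_on (\<lambda>a. (\<phi> a, \<psi> a)) A"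
  shows "mtrace A (mmult A (reflection (normalized_gram A J X)) (reflection (normalized_gram A K Y)))
    = (\<Sum>a\<in>A. (2 / real (card {r\<in>A. \<phi> r = \<phi> a}) - 1) * (2 / real (card {r\<in>A. \<psi> r = \<psi> a}) - 1))"
  unfolding mtrace_def
proof (rule sum.cong[OF refl])
  fix a assume "a \<in> A"
  have P: "normalized_gram A J X b c = (if \<phi> c = \<phi> b then 1 / real (card {r\<in>A. \<phi> r = \<phi> b}) else 0)"
    if "b \<in> A" "c \<in> A" for b c
    by (rule normalized_gram_indicator) (use assms(1,2,4) X that in auto)
  have Q: "normalized_gram A K Y b c = (if \<psi> c = \<psi> b then 1 / real (card {r\<in>A. \<psi> r = \<psi> b}) else 0)"
    if "b \<in> A" "c \<in> A" for b c
    by (rule normalized_gram_indicator) (use assms(1,3,5) Y that in auto)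
  let ?t = "\<lambda>b. reflection (normalized_gram A J X) a b * reflection (normalized_gram A K Y) b a"
  have off_diagonal: "?t b = 0" if "b \<in> A" "b \<noteq> a" for b
  proof -
    have "\<phi> b \<noteq> \<phi> a \<or> \<psi> b \<noteq> \<psi> a"
      using labels_determine \<open>a \<in> A\<close> that by (auto dest: inj_onD)
    then show ?thesis using that P[OF \<open>a \<in> A\<close> \<open>b \<in> A\<close>] Q[OF \<open>b \<in> A\<close> \<open>a \<in> A\<close>]
      by (auto simp: idm_def)
  qed
  have "(\<Sum>b\<in>A - {a}. ?t b) = 0"
    using off_diagonal by (intro sum.neutral) blast
  then have "mmult A (reflection (normalized_gram A J X)) (reflection (normalized_gram A K Y)) a a = ?t a"
    by (simp add: mmult_def[of A] sum.remove[OF \<open>finite A\<close> \<open>a \<in> A\<close>])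
  also have "\<dots> = (2 / real (card {r\<in>A. \<phi> r = \<phi> a}) - 1) * (2 / real (card {r\<in>A. \<psi> r = \<psi> a}) - 1)"
    using P[OF \<open>a \<in> A\<close> \<open>a \<in> A\<close>] Q[OF \<open>a \<in> A\<close> \<open>a \<in> A\<close>] by (simp add: idm_def)
  finally show "mmult A (reflection (normalized_gram A J X)) (reflection (normalized_gram A K Y)) a a
    = (2 / real (card {r\<in>A. \<phi> r = \<phi> a}) - 1) * (2 / real (card {r\<in>A. \<psi> r = \<psi> a}) - 1)" .
qed

lemma card_mult_sum_product_if_factor_constant:
  fixes x y :: "'a \<Rightarrow> real"
  assumes "(\<exists>c. \<forall>a\<in>A. x a = c) \<or> (\<exists>c. \<forall>a\<in>A. y a = c)"
  shows "real (card A) * (\<Sum>a\<in>A. x a * y a) = (\<Sum>a\<in>A. x a) * (\<Sum>a\<in>A. y a)"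
  using assms
proof
  assume "\<exists>c. \<forall>a\<in>A. x a = c"
  then obtain c where "\<forall>a\<in>A. x a = c" by blast
  then show ?thesis by (simp add: sum_distrib_left sum_distrib_right mult_ac)
next
  assume "\<exists>c. \<forall>a\<in>A. y a = c"
  then obtain c where "\<forall>a\<in>A. y a = c" by blast
  then show ?thesis by (simp add: sum_distrib_left sum_distrib_right mult_ac)
qed

lemma finite_arcs: "simple_graph V E \<Longrightarrow> finite (arcs V E)"
  by (rule finite_subset[of _ "V \<times> V"]) (auto simp: arcs_def simple_graph_def)

lemma fst_arc_mem: "a \<in> arcs V E \<Longrightarrow> fst a \<in> V"
  by (auto simp: arcs_def)

lemma swap_arc: "simple_graph V E \<Longrightarrow> a \<in> arcs V E \<Longrightarrow> prod.swap a \<in> arcs V E"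
  by (auto simp: arcs_def simple_graph_def)

lemma card_arcs_with_tail:
  assumes "simple_graph V E" "u \<in> V"
  shows "card {r\<in>arcs V E. fst r = u} = degree E u"
proof -
  have "{r\<in>arcs V E. fst r = u} = Pair u ` {v. E u v}"
    using assms by (auto simp: arcs_def simple_graph_def)
  then show ?thesis by (simp add: degree_def card_image inj_on_def)
qed

lemma sum_inverse_degree_tail:
  assumes "simple_graph V E"
  shows "(\<Sum>a\<in>arcs V E. 1 / real (degree E (fst a))) = real (card (fst ` arcs V E))"
proof -
  have "(\<Sum>a\<in>arcs V E. 1 / real (degree E (fst a)))
      = (\<Sum>a\<in>arcs V E. 1 / real (card {r\<in>arcs V E. fst r = fst a}))"
    by (intro sum.cong) (simp_all add: card_arcs_with_tail[OF assms] fst_arc_mem)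
  also have "\<dots> = real (card (fst ` arcs V E))"
    using finite_arcs[OF assms] by (rule sum_inverse_card_fibre)
  finally show ?thesis .
qed

lemma card_arcs_eq_twice_edges:
  assumes "simple_graph V E"
  shows "card (arcs V E) = 2 * card (graph_edges E)"
proof -
  let ?edge = "\<lambda>a. {fst a, snd a}"
  have edges: "graph_edges E = ?edge ` arcs V E"
    using assms unfolding graph_edges_def arcs_def simple_graph_def by force
  have "real (card (arcs V E)) = (\<Sum>a\<in>arcs V E. (\<lambda>_. 1) (?edge a))"
    by simp
  also have "\<dots> = (\<Sum>e\<in>?edge ` arcs V E. real (card {r\<in>arcs V E. ?edge r = e}) * 1)"
    using finite_arcs[OF assms] by (rule sum_by_fibres)
  also have "\<dots> = (\<Sum>e\<in>?edge ` arcs V E. 2)"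
  proof (rule sum.cong[OF refl])
    fix e assume "e \<in> ?edge ` arcs V E"
    then obtain u v where uv: "(u, v) \<in> arcs V E" "e = {u, v}" by auto
    then have "u \<noteq> v" "(v, u) \<in> arcs V E"
      using assms by (auto simp: arcs_def simple_graph_def)
    moreover have "{r\<in>arcs V E. ?edge r = e} = {(u, v), (v, u)}"
      using uv \<open>(v, u) \<in> arcs V E\<close> by (auto simp: doubleton_eq_iff)
    ultimately show "real (card {r\<in>arcs V E. ?edge r = e}) * 1 = 2" by simp
  qed
  finally show ?thesis using edges by simp
qed

lemma fst_arcs_eq_vertices:
  assumes connected: "connected_graph V E" and "arcs V E \<noteq> {}"
  shows "fst ` arcs V E = V"
proof
  show "fst ` arcs V E \<subseteq> V" by (auto simp: arcs_def)
next
  show "V \<subseteq> fst ` arcs V E"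
  proof
    fix u assume "u \<in> V"
    obtain x y where xy: "(x, y) \<in> arcs V E" using assms(2) by auto
    then have "E\<^sup>*\<^sup>* u x"
      using \<open>u \<in> V\<close> connected by (auto simp: connected_graph_def arcs_def)
    then show "u \<in> fst ` arcs V E"
    proof (cases rule: converse_rtranclpE)
      case base
      then show ?thesis using xy by force
    next
      case (step w)
      then have "(u, w) \<in> arcs V E"
        using connected by (auto simp: arcs_def connected_graph_def simple_graph_def)
      then show ?thesis by force
    qed
  qed
qed

locale circular_embedding =
  fixes V :: "'v set" and E :: "'v \<Rightarrow> 'v \<Rightarrow> bool" and \<rho> :: "'v \<times> 'v \<Rightarrow> 'v \<times> 'v"
  assumes simple: "simple_graph V E"
    and rotation: "rotation_system V E \<rho>"
    and circular: "circular V E \<rho>"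
begin

definition face_step :: "'v \<times> 'v \<Rightarrow> 'v \<times> 'v"
  where "face_step = perm_restrict (face_perm \<rho>) (arcs V E)"

lemma face_step_apply: "a \<in> arcs V E \<Longrightarrow> face_step a = face_perm \<rho> a"
  by (simp add: face_step_def perm_restrict_simps)

lemma face_step_permutes: "face_step permutes arcs V E"
proof (rule inj_imp_permutes)
  have \<rho>: "\<rho> permutes arcs V E" using rotation by (simp add: rotation_system_def)
  then have "inj_on (\<rho> \<circ> prod.swap) (arcs V E)"
    by (auto intro: comp_inj_on permutes_inj_on)
  then show "inj_on face_step (arcs V E)"
    by (rule inj_on_cong[THEN iffD1, rotated]) (simp add: face_step_apply face_perm_def prod.swap_def)
  show "face_step a \<in> arcs V E" if "a \<in> arcs V E" for a
    using that swap_arc[OF simple] \<rho>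
    by (simp add: face_step_apply face_perm_def prod.swap_def permutes_in_image)
qed (simp_all add: finite_arcs[OF simple] face_step_def perm_restrict_simps)

lemma permutation_face_step: "permutation face_step"
  using face_step_permutes finite_arcs[OF simple] by (auto simp: permutation_permutes)

lemma face_of_eq_orbit:
  assumes "a \<in> arcs V E"
  shows "face_of \<rho> a = orbit face_step a"
proof -
  have "(face_perm \<rho> ^^ n) a = (face_step ^^ n) a" for n
  proof (induction n)
    case (Suc n)
    have "(face_step ^^ n) a \<in> arcs V E"
      using assms face_step_permutes by (induction n) (auto simp: permutes_in_image)
    then show ?case using Suc by (simp add: face_step_apply)
  qed simp
  then show ?thesis
    by (simp add: face_of_def orbit_altdef_permutation[OF permutation_face_step])
qed

lemma face_of_subset_arcs: "a \<in> arcs V E \<Longrightarrow> face_of \<rho> a \<subseteq> arcs V E"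
  using face_of_eq_orbit face_step_permutes permutes_orbit_subset by metis

lemma mem_face_of_iff:
  assumes "a \<in> arcs V E" "b \<in> arcs V E"
  shows "b \<in> face_of \<rho> a \<longleftrightarrow> face_of \<rho> b = face_of \<rho> a"
proof -
  have "cyclic_on face_step (orbit face_step a)"
    using face_step_permutes finite_arcs[OF simple] by (rule cyclic_on_orbit)
  moreover have "b \<in> orbit face_step b"
    using permutation_face_step by (rule permutation_self_in_orbit)
  ultimately show ?thesis
    using assms by (auto simp: face_of_eq_orbit dest: orbit_cyclic_eq3)
qed

lemma arcs_with_face: "a \<in> arcs V E \<Longrightarrow> {r\<in>arcs V E. face_of \<rho> r = face_of \<rho> a} = face_of \<rho> a"
  using mem_face_of_iff face_of_subset_arcs by blast

lemma face_and_tail_determine_arc: "inj_on (\<lambda>a. (face_of \<rho> a, fst a)) (arcs V E)"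
proof (rule inj_onI)
  fix a b assume "a \<in> arcs V E" "b \<in> arcs V E" "(face_of \<rho> a, fst a) = (face_of \<rho> b, fst b)"
  moreover have "a \<in> face_of \<rho> a"
    by (auto simp: face_of_def intro: exI[of _ 0])
  ultimately show "a = b"
    using circular mem_face_of_iff unfolding circular_def faces_def inj_on_def by blast
qed

lemma mtrace_vf_transition:
  "mtrace (arcs V E) (vf_transition V E \<rho>)
    = (\<Sum>a\<in>arcs V E. (2 / real (card (face_of \<rho> a)) - 1) * (2 / real (degree E (fst a)) - 1))"
proof -
  have "mtrace (arcs V E) (vf_transition V E \<rho>)
      = (\<Sum>a\<in>arcs V E. (2 / real (card {r\<in>arcs V E. face_of \<rho> r = face_of \<rho> a}) - 1)
                       * (2 / real (card {r\<in>arcs V E. fst r = fst a}) - 1))"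
    unfolding vf_transition_def Let_def
  proof (rule mtrace_reflection_product)
    show "arc_face_inc r f = (if face_of \<rho> r = f then 1 else 0)"
      if "r \<in> arcs V E" "f \<in> faces V E \<rho>" for r f
    proof -
      obtain c where "c \<in> arcs V E" "f = face_of \<rho> c"
        using \<open>f \<in> faces V E \<rho>\<close> by (auto simp: faces_def)
      then show ?thesis using mem_face_of_iff \<open>r \<in> arcs V E\<close> by (simp add: arc_face_inc_def)
    qed
  qed (use simple finite_arcs[OF simple] face_and_tail_determine_arc in
        \<open>auto simp: simple_graph_def faces_def arcs_def arc_tail_inc_def\<close>)
  also have "\<dots> = (\<Sum>a\<in>arcs V E. (2 / real (card (face_of \<rho> a)) - 1) * (2 / real (degree E (fst a)) - 1))"
    by (intro sum.cong) (simp_all add: arcs_with_face card_arcs_with_tail[OF simple] fst_arc_mem)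
  finally show ?thesis .
qed

lemma sum_inverse_face_size:
  "(\<Sum>a\<in>arcs V E. 1 / real (card (face_of \<rho> a))) = real (card (faces V E \<rho>))"
proof -
  have "(\<Sum>a\<in>arcs V E. 1 / real (card (face_of \<rho> a)))
      = (\<Sum>a\<in>arcs V E. 1 / real (card {r\<in>arcs V E. face_of \<rho> r = face_of \<rho> a}))"
    by (intro sum.cong) (simp_all add: arcs_with_face)
  also have "\<dots> = real (card (faces V E \<rho>))"
    unfolding faces_def using finite_arcs[OF simple] by (rule sum_inverse_card_fibre)
  finally show ?thesis .
qed

end

theorem lemma2p3:
  fixes V :: "'v set" and E :: "'v \<Rightarrow> 'v \<Rightarrow> bool" and \<rho> :: "'v \<times> 'v \<Rightarrow> 'v \<times> 'v"
  assumes "connected_graph V E"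
    and "arcs V E \<noteq> {}"
    and "rotation_system V E \<rho>"
    and "circular V E \<rho>"
    and "regular_graph V E \<or> dual_regular V E \<rho>"
  shows "mtrace (arcs V E) (vf_transition V E \<rho>) =
    2 * (real (card V) * real (card (faces V E \<rho>)) / real (card (graph_edges E))
         - (real (card V) + real (card (faces V E \<rho>)) - real (card (graph_edges E))))"
proof -
  have simple: "simple_graph V E" using assms(1) by (simp add: connected_graph_def)
  interpret circular_embedding V E \<rho> using simple assms(3,4) by unfold_locales
  define x :: "'v \<times> 'v \<Rightarrow> real" where "x a = 1 / real (card (face_of \<rho> a))" for a
  define y :: "'v \<times> 'v \<Rightarrow> real" where "y a = 1 / real (degree E (fst a))" for a
  let ?n = "real (card V)" and ?s = "real (card (faces V E \<rho>))" and ?l = "real (card (graph_edges E))"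
  have sums: "(\<Sum>a\<in>arcs V E. x a) = ?s" "(\<Sum>a\<in>arcs V E. y a) = ?n" "real (card (arcs V E)) = 2 * ?l"
    using sum_inverse_face_size sum_inverse_degree_tail[OF simple] card_arcs_eq_twice_edges[OF simple]
      fst_arcs_eq_vertices[OF assms(1,2)] by (simp_all add: x_def y_def)
  have "(\<exists>c. \<forall>a\<in>arcs V E. x a = c) \<or> (\<exists>c. \<forall>a\<in>arcs V E. y a = c)"
    using assms(5) unfolding regular_graph_def dual_regular_def dual_degree_def faces_def x_def y_def
    by (metis fst_arc_mem image_eqI)
  then have "2 * ?l * (\<Sum>a\<in>arcs V E. x a * y a) = ?s * ?n"
    using card_mult_sum_product_if_factor_constant sums by metis
  moreover have "card (arcs V E) > 0"
    using assms(2) finite_arcs[OF simple] by (simp add: card_gt_0_iff)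
  ultimately have product: "(\<Sum>a\<in>arcs V E. x a * y a) = ?n * ?s / (2 * ?l)"
    using sums(3) by (simp add: field_simps)
  have "mtrace (arcs V E) (vf_transition V E \<rho>)
      = 4 * (\<Sum>a\<in>arcs V E. x a * y a) - 2 * (\<Sum>a\<in>arcs V E. x a) - 2 * (\<Sum>a\<in>arcs V E. y a)
        + real (card (arcs V E))"
    unfolding mtrace_vf_transition x_def y_def
    by (simp add: algebra_simps sum.distrib sum_subtractf sum_distrib_left)
  then show ?thesis unfolding product sums by (simp add: field_simps)
qed

end
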